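(* Let $n,d\ge 1$, let $\mathbb{D}^n=\{0,1,\dots,d-1\}^n$, and let $W$ be the complex Hilbert space of dimension $d^n$ with orthonormal (standard) basis $\{v_x\}_{x\in\mathbb{D}^n}$. Let $F:\mathbb{D}^n\to\mathbb{R}$ be an objective function and let $H_P$ be the problem Hamiltonian representing $F$, i.e. the linear operator with $H_P(v_x)=F(x)v_x$ for all $x\in\mathbb{D}^n$. Let $K$ be a group acting linearly and unitarily on $W$ such that every element of $K$ commutes with $H_P$ (i.e. $K$ is a group of symmetries of $H_P$, not necessarily all of them), and let $$W=\bigoplus_i W_i,\qquad W_i=V_i^{\oplus m_i},$$ be the decomposition of $W$ into isotypic components, where $V_i$ ranges over the pairwise non-isomorphic irreducible representations of $K$ occurring in $W$ and $m_i$ is the multiplicity of $V_i$. Fix an index $i$ and suppose $H_{M,i}$ is a Hamiltonian on $W$ such that (1) the matrix of $H_{M,i}$ in the standard basis satisfies the hypotheses of the Perron–Frobenius theorem (it is a real matrix with nonnegative entries that is irreducible, i.e. it leaves no proper nonzero coordinate subspace invariant); (2) the lowest-energy eigenspace of $H_{M,i}$ is one-dimensional and contained in $W_i$; and (3) $H_{M,i}$ preserves the decomposition $W=\bigoplus_j W_j$, i.e. $H_{M,i}(W_j)\subseteq W_j$ for all $j$. Let $\xi_i$ be a unit vector spanning the lowest-energy eigenspace of $H_{M,i}$. Then one obtains a reduced QAOA with problem Hamiltonian $H_P$, mixer Hamiltonian $H_{M,i}$ and initial state $\xi_i$ whose ambient Hilbert space is $W_i$: for every $p\ge 1$ and all real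 parameters $\beta_1,\gamma_1,\dots,\beta_p,\gamma_p$, the state $$e^{-i\beta_1 H_{M,i}}e^{-i\gamma_1 H_P}\cdots e^{-i\beta_p H_{M,i}}e^{-i\gamma_p H_P}\,\xi_i$$ lies in $W_i$.
   Context: QAOA (Quantum Approximate Optimization Algorithm) of depth $p$ with problem Hamiltonian $H_P$, mixer Hamiltonian $H_M$ and initial state $\xi$ (a lowest-energy state of $H_M$) prepares the state $e^{-i\beta_1 H_M}e^{-i\gamma_1 H_P}\cdots e^{-i\beta_p H_M}e^{-i\gamma_p H_P}\xi$ for real parameters $\beta_j,\gamma_j$, and then measures in the standard basis. *)

theory Defs
  imports Complex_Main "HOL-Algebra.Group"
begin

text \<open>The Hilbert space W of dimension d^n is modelled concretely: the basis is indexed by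
  D^n = {0,...,d-1}^n (lists of length n with entries < d); vectors are functions
  nat list => complex vanishing outside D^n; operators are matrices
  nat list => nat list => complex (entries outside D^n x D^n irrelevant/zero).\<close>

type_synonym cvec = "nat list \<Rightarrow> complex"
type_synonym cop = "nat list \<Rightarrow> nat list \<Rightarrow> complex"

definition Dn :: "nat \<Rightarrow> nat \<Rightarrow> nat list set" where
  "Dn d n = {x. length x = n \<and> (\<forall>a\<in>set x. a < d)}"

definition inW :: "nat \<Rightarrow> nat \<Rightarrow> cvec \<Rightarrow> bool" where
  "inW d n v \<longleftrightarrow> (\<forall>x. x \<notin> Dn d n \<longrightarrow> v x = 0)"

definition is_op :: "nat \<Rightarrow> nat \<Rightarrow> cop \<Rightarrow> bool" where
  "is_op d n A \<longleftrightarrow> (\<forall>x y. x \<notin> Dn d n \<or> y \<notin> Dn d n \<longrightarrow> A x y = 0)"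

definition op_apply :: "nat \<Rightarrow> nat \<Rightarrow> cop \<Rightarrow> cvec \<Rightarrow> cvec" where
  "op_apply d n A v = (\<lambda>x. if x \<in> Dn d n then (\<Sum>y\<in>Dn d n. A x y * v y) else 0)"

definition op_mult :: "nat \<Rightarrow> nat \<Rightarrow> cop \<Rightarrow> cop \<Rightarrow> cop" where
  "op_mult d n A B = (\<lambda>x y. if x \<in> Dn d n \<and> y \<in> Dn d n
       then (\<Sum>z\<in>Dn d n. A x z * B z y) else 0)"

definition op_id :: "nat \<Rightarrow> nat \<Rightarrow> cop" where
  "op_id d n = (\<lambda>x y. if x \<in> Dn d n \<and> x = y then 1 else 0)"

definition op_adj :: "cop \<Rightarrow> cop" where
  "op_adj A = (\<lambda>x y. cnj (A y x))"

primrec op_pow :: "nat \<Rightarrow> nat \<Rightarrow> cop \<Rightarrow> nat \<Rightarrow> cop" where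
  "op_pow d n A 0 = op_id d n"
| "op_pow d n A (Suc k) = op_mult d n A (op_pow d n A k)"

definition op_exp :: "nat \<Rightarrow> nat \<Rightarrow> cop \<Rightarrow> cop" where
  "op_exp d n A = (\<lambda>x y. \<Sum>k. op_pow d n A k x y / fact k)"

definition evol :: "nat \<Rightarrow> nat \<Rightarrow> cop \<Rightarrow> real \<Rightarrow> cop" where
  "evol d n H t = op_exp d n (\<lambda>x y. - (\<i> * complex_of_real t) * H x y)"

definition hermitian :: "nat \<Rightarrow> nat \<Rightarrow> cop \<Rightarrow> bool" where
  "hermitian d n H \<longleftrightarrow> is_op d n H \<and> op_adj H = H"

definition unitary_op :: "nat \<Rightarrow> nat \<Rightarrow> cop \<Rightarrow> bool" where
  "unitary_op d n U \<longleftrightarrow> is_op d n U \<and> op_mult d n (op_adj U) U = op_id d n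
      \<and> op_mult d n U (op_adj U) = op_id d n"

definition problem_ham :: "nat \<Rightarrow> nat \<Rightarrow> (nat list \<Rightarrow> real) \<Rightarrow> cop" where
  "problem_ham d n F = (\<lambda>x y. if x \<in> Dn d n \<and> x = y then complex_of_real (F x) else 0)"

definition vnorm2 :: "nat \<Rightarrow> nat \<Rightarrow> cvec \<Rightarrow> real" where
  "vnorm2 d n v = (\<Sum>x\<in>Dn d n. (cmod (v x))\<^sup>2)"

definition subspaceW :: "nat \<Rightarrow> nat \<Rightarrow> cvec set \<Rightarrow> bool" where
  "subspaceW d n S \<longleftrightarrow> S \<subseteq> {v. inW d n v} \<and> (\<lambda>_. 0) \<in> S
     \<and> (\<forall>u\<in>S. \<forall>v\<in>S. (\<lambda>x. u x + v x) \<in> S)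
     \<and> (\<forall>c::complex. \<forall>v\<in>S. (\<lambda>x. c * v x) \<in> S)"

definition spanW :: "nat \<Rightarrow> nat \<Rightarrow> cvec set \<Rightarrow> cvec set" where
  "spanW d n S = \<Inter>{T. subspaceW d n T \<and> S \<subseteq> T}"

definition unitary_rep :: "nat \<Rightarrow> nat \<Rightarrow> ('g, 'b) monoid_scheme \<Rightarrow> ('g \<Rightarrow> cop) \<Rightarrow> bool" where
  "unitary_rep d n K \<rho> \<longleftrightarrow> group K
     \<and> (\<forall>g\<in>carrier K. unitary_op d n (\<rho> g))
     \<and> (\<forall>g\<in>carrier K. \<forall>h\<in>carrier K. \<rho> (g \<otimes>\<^bsub>K\<^esub> h) = op_mult d n (\<rho> g) (\<rho> h))
     \<and> \<rho> \<one>\<^bsub>K\<^esub> = op_id d n"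

definition invariant :: "nat \<Rightarrow> nat \<Rightarrow> ('g, 'b) monoid_scheme \<Rightarrow> ('g \<Rightarrow> cop) \<Rightarrow> cvec set \<Rightarrow> bool" where
  "invariant d n K \<rho> S \<longleftrightarrow> (\<forall>g\<in>carrier K. \<forall>v\<in>S. op_apply d n (\<rho> g) v \<in> S)"

definition subrep :: "nat \<Rightarrow> nat \<Rightarrow> ('g, 'b) monoid_scheme \<Rightarrow> ('g \<Rightarrow> cop) \<Rightarrow> cvec set \<Rightarrow> bool" where
  "subrep d n K \<rho> S \<longleftrightarrow> subspaceW d n S \<and> invariant d n K \<rho> S"

definition irred_subrep :: "nat \<Rightarrow> nat \<Rightarrow> ('g, 'b) monoid_scheme \<Rightarrow> ('g \<Rightarrow> cop) \<Rightarrow> cvec set \<Rightarrow> bool" where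
  "irred_subrep d n K \<rho> S \<longleftrightarrow> subrep d n K \<rho> S \<and> S \<noteq> {\<lambda>_. 0}
     \<and> (\<forall>T. subrep d n K \<rho> T \<and> T \<subseteq> S \<longrightarrow> T = {\<lambda>_. 0} \<or> T = S)"

definition rep_iso :: "nat \<Rightarrow> nat \<Rightarrow> ('g, 'b) monoid_scheme \<Rightarrow> ('g \<Rightarrow> cop) \<Rightarrow> cvec set \<Rightarrow> cvec set \<Rightarrow> bool" where
  "rep_iso d n K \<rho> S T \<longleftrightarrow> (\<exists>f. bij_betw f S T
     \<and> (\<forall>u\<in>S. \<forall>v\<in>S. f (\<lambda>x. u x + v x) = (\<lambda>x. f u x + f v x))
     \<and> (\<forall>c::complex. \<forall>v\<in>S. f (\<lambda>x. c * v x) = (\<lambda>x. c * f v x))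
     \<and> (\<forall>g\<in>carrier K. \<forall>v\<in>S. f (op_apply d n (\<rho> g) v) = op_apply d n (\<rho> g) (f v)))"

definition isotypic :: "nat \<Rightarrow> nat \<Rightarrow> ('g, 'b) monoid_scheme \<Rightarrow> ('g \<Rightarrow> cop) \<Rightarrow> cvec set \<Rightarrow> cvec set" where
  "isotypic d n K \<rho> V = spanW d n (\<Union>{U. irred_subrep d n K \<rho> U \<and> rep_iso d n K \<rho> V U})"

definition eigenspace_op :: "nat \<Rightarrow> nat \<Rightarrow> cop \<Rightarrow> complex \<Rightarrow> cvec set" where
  "eigenspace_op d n H ev = {v. inW d n v \<and> op_apply d n H v = (\<lambda>x. ev * v x)}"

definition is_eigenvalue :: "nat \<Rightarrow> nat \<Rightarrow> cop \<Rightarrow> complex \<Rightarrow> bool" where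
  "is_eigenvalue d n H ev \<longleftrightarrow> eigenspace_op d n H ev \<noteq> {\<lambda>_. 0}"

definition lowest_eigenvalue :: "nat \<Rightarrow> nat \<Rightarrow> cop \<Rightarrow> real \<Rightarrow> bool" where
  "lowest_eigenvalue d n H e \<longleftrightarrow> is_eigenvalue d n H (complex_of_real e)
     \<and> (\<forall>\<mu>. is_eigenvalue d n H \<mu> \<longrightarrow> \<mu> \<in> \<real> \<and> e \<le> Re \<mu>)"

text \<open>Hypotheses of the Perron-Frobenius theorem: real nonnegative entries, irreducible
  (no proper nonzero coordinate subspace span{v_y : y in S} is invariant).\<close>
definition perron_frobenius_hyp :: "nat \<Rightarrow> nat \<Rightarrow> cop \<Rightarrow> bool" where
  "perron_frobenius_hyp d n H \<longleftrightarrow>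
     (\<forall>x\<in>Dn d n. \<forall>y\<in>Dn d n. Im (H x y) = 0 \<and> Re (H x y) \<ge> 0)
     \<and> (\<forall>S. S \<subseteq> Dn d n \<and> S \<noteq> {} \<and> S \<noteq> Dn d n \<longrightarrow>
          (\<exists>x\<in>Dn d n - S. \<exists>y\<in>S. H x y \<noteq> 0))"

text \<open>QAOA state for parameter list [(beta_1,gamma_1),...,(beta_p,gamma_p)]:
  e^{-i beta_1 H_M} e^{-i gamma_1 H_P} ... e^{-i beta_p H_M} e^{-i gamma_p H_P} xi.\<close>
primrec qaoa_state :: "nat \<Rightarrow> nat \<Rightarrow> cop \<Rightarrow> cop \<Rightarrow> (real \<times> real) list \<Rightarrow> cvec \<Rightarrow> cvec" where
  "qaoa_state d n HM HP [] \<xi> = \<xi>"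
| "qaoa_state d n HM HP (bg # ps) \<xi> =
     op_apply d n (evol d n HM (fst bg)) (op_apply d n (evol d n HP (snd bg)) (qaoa_state d n HM HP ps \<xi>))"

end

(*
  W_i is a subspace of W that both Hamiltonians leave invariant: H_M by hypothesis, and H_P
  because it commutes with K, so that by Schur's lemma it maps every irreducible
  subrepresentation isomorphic to V_i either to 0 or isomorphically onto another such
  subrepresentation. If an operator leaves a subspace of the finite-dimensional space W
  invariant, so does its exponential: the subspace is the common zero set of the linear
  functionals vanishing on it, and these commute with the entrywise convergent exponential
  series. Hence every factor of the QAOA circuit preserves W_i, which contains xi_i.
*)

theory Submission
  imports Defs "HOL-Library.Function_Algebras"
begin

lemma finite_Dn: "finite (Dn d n)"
proof -
  have "Dn d n = {xs. set xs \<subseteq> {..<d} \<and> length xs = n}"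
    unfolding Dn_def by auto
  then show ?thesis
    using finite_lists_length_eq[of "{..<d}" n] by simp
qed

lemma inW_op_apply: "inW d n (op_apply d n A v)"
  unfolding inW_def op_apply_def by auto

lemma op_apply_add: "op_apply d n A (\<lambda>x. u x + v x) = (\<lambda>x. op_apply d n A u x + op_apply d n A v x)"
  unfolding op_apply_def by (auto simp: fun_eq_iff distrib_left sum.distrib)

lemma op_apply_scale: "op_apply d n A (\<lambda>x. c * v x) = (\<lambda>x. c * op_apply d n A v x)"
  unfolding op_apply_def by (auto simp: fun_eq_iff sum_distrib_left algebra_simps)

lemma op_apply_zero: "op_apply d n A (\<lambda>_. 0) = (\<lambda>_. 0)"
  unfolding op_apply_def by auto

lemma op_apply_scale_op: "op_apply d n (\<lambda>x y. c * A x y) v = (\<lambda>x. c * op_apply d n A v x)"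
  unfolding op_apply_def by (auto simp: fun_eq_iff sum_distrib_left algebra_simps)

lemma op_apply_op_mult:
  "op_apply d n (op_mult d n A B) v = op_apply d n A (op_apply d n B v)"
proof -
  have "(\<Sum>y\<in>Dn d n. (\<Sum>z\<in>Dn d n. A x z * B z y) * v y)
      = (\<Sum>z\<in>Dn d n. A x z * (\<Sum>y\<in>Dn d n. B z y * v y))" for x
    by (simp add: sum_distrib_left sum_distrib_right mult.assoc) (rule sum.swap)
  then show ?thesis
    unfolding op_apply_def op_mult_def by (auto simp: fun_eq_iff)
qed

lemma op_apply_op_id:
  assumes "inW d n v" shows "op_apply d n (op_id d n) v = v"
proof -
  have "(\<Sum>y\<in>Dn d n. (if x \<in> Dn d n \<and> x = y then 1 else 0) * v y) = v x"
    if "x \<in> Dn d n" for x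
  proof -
    have "(\<Sum>y\<in>Dn d n. (if x \<in> Dn d n \<and> x = y then 1 else 0) * v y)
        = (\<Sum>y\<in>Dn d n. if x = y then v y else 0)"
      using that by (intro sum.cong) auto
    with that show ?thesis by (simp add: finite_Dn)
  qed
  with assms show ?thesis
    unfolding op_apply_def inW_def op_id_def by (intro ext) simp
qed

definition cscale :: "complex \<Rightarrow> cvec \<Rightarrow> cvec" where
  "cscale c v = (\<lambda>x. c * v x)"

lemma vector_space_cscale: "vector_space cscale"
  by unfold_locales (auto simp: cscale_def fun_eq_iff algebra_simps)

lemma vector_space_pair_cscale: "vector_space_pair cscale ((*) :: complex \<Rightarrow> complex \<Rightarrow> complex)"
  unfolding vector_space_pair_def using vector_space_cscale
  by (auto simp: vector_space_def algebra_simps)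

lemma subspaceW_imp_subspace:
  assumes "subspaceW d n S" shows "module.subspace cscale S"
proof -
  interpret vs: vector_space cscale by (rule vector_space_cscale)
  show ?thesis
    using assms unfolding subspaceW_def vs.subspace_def cscale_def
    by (auto simp: zero_fun_def plus_fun_def)
qed

lemma subspaceW_zero: "subspaceW d n S \<Longrightarrow> (\<lambda>_. 0) \<in> S"
  unfolding subspaceW_def by blast

lemma subspaceW_diff:
  assumes S: "subspaceW d n S" and "u \<in> S" "v \<in> S"
  shows "(\<lambda>x. u x - v x) \<in> S"
proof -
  have add: "\<And>u v. u \<in> S \<Longrightarrow> v \<in> S \<Longrightarrow> (\<lambda>x. u x + v x) \<in> S"
    and scale: "\<And>c v. v \<in> S \<Longrightarrow> (\<lambda>x. c * v x) \<in> S"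
    using S unfolding subspaceW_def by auto
  from add[OF \<open>u \<in> S\<close> scale[OF \<open>v \<in> S\<close>, of "-1"]] show ?thesis
    by simp
qed

lemma subspaceW_W: "subspaceW d n (Collect (inW d n))"
  unfolding subspaceW_def inW_def by auto

lemma subspaceW_Inter:
  assumes "\<T> \<noteq> {}" and sub: "\<And>T. T \<in> \<T> \<Longrightarrow> subspaceW d n T"
  shows "subspaceW d n (\<Inter>\<T>)"
  unfolding subspaceW_def
proof (intro conjI ballI allI)
  show "\<Inter>\<T> \<subseteq> Collect (inW d n)"
    using assms unfolding subspaceW_def by blast
  show "(\<lambda>_. 0) \<in> \<Inter>\<T>"
    using sub unfolding subspaceW_def by blast
  fix u v assume "u \<in> \<Inter>\<T>" "v \<in> \<Inter>\<T>"
  then show "(\<lambda>x. u x + v x) \<in> \<Inter>\<T>"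
    using sub unfolding subspaceW_def by blast
next
  fix c v assume "v \<in> \<Inter>\<T>"
  then show "(\<lambda>x. c * v x) \<in> \<Inter>\<T>"
    using sub unfolding subspaceW_def by blast
qed

lemma subspaceW_spanW: "X \<subseteq> Collect (inW d n) \<Longrightarrow> subspaceW d n (spanW d n X)"
  unfolding spanW_def using subspaceW_W by (intro subspaceW_Inter) auto

lemma spanW_minimal: "subspaceW d n T \<Longrightarrow> X \<subseteq> T \<Longrightarrow> spanW d n X \<subseteq> T"
  unfolding spanW_def by auto

lemma spanW_superset: "X \<subseteq> spanW d n X"
  unfolding spanW_def by auto

lemma subspaceW_vimage_op_apply:
  "subspaceW d n T \<Longrightarrow> subspaceW d n {v. inW d n v \<and> op_apply d n A v \<in> T}"
  unfolding subspaceW_def by (auto simp: op_apply_add op_apply_scale op_apply_zero inW_def)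

lemma vector_eq_sum_coordinates:
  assumes "inW d n w"
  shows "w = (\<Sum>x\<in>Dn d n. cscale (w x) (\<lambda>y. if y = x then 1 else 0))"
proof -
  have sum_apply: "(sum f A) y = (\<Sum>a\<in>A. f a y)" for f :: "nat list \<Rightarrow> cvec" and A y
    by (induction A rule: infinite_finite_induct) auto
  show ?thesis
    using assms finite_Dn[of d n] unfolding inW_def cscale_def
    by (auto simp: fun_eq_iff sum_apply if_distrib cong: if_cong)
qed

lemma subspaceW_separating_functional:
  assumes S: "subspaceW d n S" and u: "inW d n u" "u \<notin> S"
  obtains c where "\<forall>w\<in>S. (\<Sum>x\<in>Dn d n. c x * w x) = 0" "(\<Sum>x\<in>Dn d n. c x * u x) \<noteq> 0"
proof -
  interpret vs: vector_space cscale by (rule vector_space_cscale)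
  interpret vp: vector_space_pair cscale "(*) :: complex \<Rightarrow> _" by (rule vector_space_pair_cscale)
  obtain B where B: "B \<subseteq> S" "vs.independent B" "S \<subseteq> vs.span B"
    using vs.maximal_independent_subset by blast
  have span_B: "vs.span B = S"
    using B subspaceW_imp_subspace[OF S] vs.span_minimal by blast
  then have "vs.independent (insert u B)"
    using B u vs.independent_insertI by auto
  then obtain g where g: "Vector_Spaces.linear cscale (*) g"
    and g_basis: "\<forall>w\<in>insert u B. g w = (if w = u then 1 else 0)"
    using vp.linear_independent_extend[of _ "\<lambda>w. if w = u then 1 else 0"] by blast
  have "\<forall>w\<in>B. g w = 0"
    using g_basis u(2) B(1) by auto
  then have g_S: "\<forall>w\<in>S. g w = 0"
    using vp.linear_eq_0_on_span[OF g] span_B by blast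
  define c where "c x = g (\<lambda>y. if y = x then 1 else 0)" for x
  have g_coord: "g w = (\<Sum>x\<in>Dn d n. c x * w x)" if "inW d n w" for w
  proof -
    interpret g: module_hom cscale "(*) :: complex \<Rightarrow> _" g
      using g by (simp add: linear_iff_module_hom)
    have "g w = (\<Sum>x\<in>Dn d n. g (cscale (w x) (\<lambda>y. if y = x then 1 else 0)))"
      by (subst vector_eq_sum_coordinates[OF that]) (rule g.sum)
    then show ?thesis
      by (simp add: g.scale c_def mult.commute)
  qed
  show thesis
  proof
    show "\<forall>w\<in>S. (\<Sum>x\<in>Dn d n. c x * w x) = 0"
      using g_S g_coord S unfolding subspaceW_def by (metis mem_Collect_eq subsetD)
    show "(\<Sum>x\<in>Dn d n. c x * u x) \<noteq> 0"
      using g_basis g_coord u(1) by simp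
  qed
qed

definition op_invariant :: "nat \<Rightarrow> nat \<Rightarrow> cop \<Rightarrow> cvec set \<Rightarrow> bool" where
  "op_invariant d n A S \<longleftrightarrow> (\<forall>v\<in>S. op_apply d n A v \<in> S)"

lemma norm_op_pow_le:
  "cmod (op_pow d n A k x y) \<le> (\<Sum>a\<in>Dn d n. \<Sum>b\<in>Dn d n. cmod (A a b)) ^ k"
proof (induction k arbitrary: x y)
  case 0
  then show ?case by (simp add: op_id_def)
next
  case (Suc k)
  define M where "M = (\<Sum>a\<in>Dn d n. \<Sum>b\<in>Dn d n. cmod (A a b))"
  have M_nonneg: "0 \<le> M"
    unfolding M_def by (simp add: sum_nonneg)
  show ?case
  proof (cases "x \<in> Dn d n \<and> y \<in> Dn d n")
    case True
    have row_le: "(\<Sum>z\<in>Dn d n. cmod (A x z)) \<le> M"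
      unfolding M_def using True finite_Dn[of d n]
      by (intro member_le_sum[where f = "\<lambda>a. \<Sum>b\<in>Dn d n. cmod (A a b)"]) (simp_all add: sum_nonneg)
    have "cmod (op_pow d n A (Suc k) x y) = cmod (\<Sum>z\<in>Dn d n. A x z * op_pow d n A k z y)"
      using True by (simp add: op_mult_def)
    also have "\<dots> \<le> (\<Sum>z\<in>Dn d n. cmod (A x z) * M ^ k)"
      unfolding M_def using Suc.IH
      by (intro order.trans[OF norm_sum] sum_mono) (simp add: norm_mult mult_left_mono)
    also have "\<dots> = (\<Sum>z\<in>Dn d n. cmod (A x z)) * M ^ k"
      by (simp add: sum_distrib_right)
    also have "\<dots> \<le> M * M ^ k"
      using row_le M_nonneg by (intro mult_right_mono) auto
    finally show ?thesis
      by (simp add: M_def)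
  next
    case False
    then show ?thesis
      using M_nonneg by (auto simp: op_mult_def M_def)
  qed
qed

lemma summable_op_pow_over_fact: "summable (\<lambda>k. op_pow d n A k x y / fact k)"
proof (rule summable_norm_cancel, rule summable_comparison_test')
  define M where "M = (\<Sum>a\<in>Dn d n. \<Sum>b\<in>Dn d n. cmod (A a b))"
  show "summable (\<lambda>k. M ^ k / fact k)"
    using summable_exp[of M] by (simp add: field_simps)
  show "norm (norm (op_pow d n A k x y / fact k)) \<le> M ^ k / fact k" for k
    using norm_op_pow_le[of d n A k x y] unfolding M_def
    by (simp add: norm_divide divide_right_mono)
qed

lemma op_apply_op_exp_sums:
  "(\<lambda>k. op_apply d n (op_pow d n A k) v x / fact k) sums op_apply d n (op_exp d n A) v x"
proof (cases "x \<in> Dn d n")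
  case True
  have "(\<lambda>k. \<Sum>y\<in>Dn d n. op_pow d n A k x y / fact k * v y)
      sums (\<Sum>y\<in>Dn d n. op_exp d n A x y * v y)"
    unfolding op_exp_def
    by (intro sums_sum sums_mult2 summable_sums summable_op_pow_over_fact)
  with True show ?thesis
    by (simp add: op_apply_def sum_divide_distrib)
qed (simp add: op_apply_def)

lemma op_invariant_op_pow:
  assumes "subspaceW d n S" "op_invariant d n A S"
  shows "op_invariant d n (op_pow d n A k) S"
proof (induction k)
  case 0
  from assms(1) show ?case
    by (auto simp: op_invariant_def subspaceW_def op_apply_op_id)
next
  case (Suc k)
  with assms(2) show ?case
    by (simp add: op_invariant_def op_apply_op_mult)
qed

lemma op_invariant_op_exp:
  assumes S: "subspaceW d n S" and A: "op_invariant d n A S"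
  shows "op_invariant d n (op_exp d n A) S"
  unfolding op_invariant_def
proof
  fix v assume v: "v \<in> S"
  let ?u = "op_apply d n (op_exp d n A) v"
  let ?a = "\<lambda>k. op_apply d n (op_pow d n A k) v"
  show "?u \<in> S"
  proof (rule ccontr)
    assume "?u \<notin> S"
    then obtain c where c_S: "\<forall>w\<in>S. (\<Sum>x\<in>Dn d n. c x * w x) = 0"
      and c_u: "(\<Sum>x\<in>Dn d n. c x * ?u x) \<noteq> 0"
      using subspaceW_separating_functional[OF S inW_op_apply] by blast
    have "(\<lambda>k. \<Sum>x\<in>Dn d n. c x * (?a k x / fact k)) sums (\<Sum>x\<in>Dn d n. c x * ?u x)"
      by (intro sums_sum sums_mult op_apply_op_exp_sums)
    moreover have "(\<Sum>x\<in>Dn d n. c x * (?a k x / fact k)) = 0" for k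
    proof -
      have "?a k \<in> S"
        using op_invariant_op_pow[OF S A] v unfolding op_invariant_def by blast
      with c_S have "(\<Sum>x\<in>Dn d n. c x * ?a k x) = 0"
        by blast
      then show ?thesis
        by (simp add: sum_divide_distrib[symmetric])
    qed
    ultimately have "(\<lambda>k. 0) sums (\<Sum>x\<in>Dn d n. c x * ?u x)"
      by simp
    then have "(\<Sum>x\<in>Dn d n. c x * ?u x) = 0"
      by (rule sums_unique2[OF _ sums_zero])
    with c_u show False ..
  qed
qed

lemma op_invariant_evol:
  assumes S: "subspaceW d n S" and H: "op_invariant d n H S"
  shows "op_invariant d n (evol d n H t) S"
  unfolding evol_def
proof (rule op_invariant_op_exp[OF S])
  show "op_invariant d n (\<lambda>x y. - (\<i> * complex_of_real t) * H x y) S"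
    using S H unfolding op_invariant_def subspaceW_def op_apply_scale_op by blast
qed

lemma qaoa_state_in_invariant_subspace:
  assumes "subspaceW d n S" "op_invariant d n HM S" "op_invariant d n HP S" "\<xi> \<in> S"
  shows "qaoa_state d n HM HP params \<xi> \<in> S"
proof (induction params)
  case Nil
  from assms(4) show ?case by simp
next
  case (Cons bg params)
  with op_invariant_evol[OF assms(1,2)] op_invariant_evol[OF assms(1,3)] show ?case
    by (simp add: op_invariant_def)
qed

definition equivariant_op :: "nat \<Rightarrow> nat \<Rightarrow> ('g, 'b) monoid_scheme \<Rightarrow> ('g \<Rightarrow> cop) \<Rightarrow> cop \<Rightarrow> bool" where
  "equivariant_op d n K \<rho> H \<longleftrightarrow> (\<forall>g\<in>carrier K. op_mult d n (\<rho> g) H = op_mult d n H (\<rho> g))"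

lemma equivariant_op_apply:
  "equivariant_op d n K \<rho> H \<Longrightarrow> g \<in> carrier K \<Longrightarrow>
    op_apply d n (\<rho> g) (op_apply d n H v) = op_apply d n H (op_apply d n (\<rho> g) v)"
  unfolding equivariant_op_def by (metis op_apply_op_mult)

lemma op_apply_diff:
  "op_apply d n A (\<lambda>x. u x - v x) = (\<lambda>x. op_apply d n A u x - op_apply d n A v x)"
  unfolding op_apply_def by (auto simp: fun_eq_iff right_diff_distrib sum_subtractf)

lemma inj_on_op_apply:
  assumes U: "subspaceW d n U" and ker: "\<And>u. u \<in> U \<Longrightarrow> op_apply d n H u = (\<lambda>_. 0) \<Longrightarrow> u = (\<lambda>_. 0)"
  shows "inj_on (op_apply d n H) U"
proof (rule inj_onI)
  fix u v assume "u \<in> U" "v \<in> U" and eq: "op_apply d n H u = op_apply d n H v"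
  then have "(\<lambda>x. u x - v x) = (\<lambda>_. 0)"
    using ker[OF subspaceW_diff[OF U]] by (simp add: op_apply_diff)
  then show "u = v"
    by (simp add: fun_eq_iff)
qed

lemma subrep_zero: "subrep d n K \<rho> {\<lambda>_. 0}"
  unfolding subrep_def subspaceW_def invariant_def inW_def by (simp add: op_apply_zero)

lemma subrep_image:
  assumes H: "equivariant_op d n K \<rho> H" and U: "subrep d n K \<rho> U"
  shows "subrep d n K \<rho> (op_apply d n H ` U)"
  unfolding subrep_def
proof
  have zero: "(\<lambda>_. 0) \<in> U" and add: "\<And>u v. u \<in> U \<Longrightarrow> v \<in> U \<Longrightarrow> (\<lambda>x. u x + v x) \<in> U"
    and scale: "\<And>c v. v \<in> U \<Longrightarrow> (\<lambda>x. c * v x) \<in> U"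
    using U unfolding subrep_def subspaceW_def by auto
  show "subspaceW d n (op_apply d n H ` U)"
    unfolding subspaceW_def
  proof (intro conjI ballI allI)
    show "op_apply d n H ` U \<subseteq> Collect (inW d n)"
      using inW_op_apply by blast
    show "(\<lambda>_. 0) \<in> op_apply d n H ` U"
      using zero op_apply_zero by (metis image_eqI)
  next
    fix a b assume "a \<in> op_apply d n H ` U" "b \<in> op_apply d n H ` U"
    then show "(\<lambda>x. a x + b x) \<in> op_apply d n H ` U"
      by (auto simp: op_apply_add[symmetric] intro: add)
  next
    fix c a assume "a \<in> op_apply d n H ` U"
    then show "(\<lambda>x. c * a x) \<in> op_apply d n H ` U"
      by (auto simp: op_apply_scale[symmetric] intro: scale)
  qed
  from U show "invariant d n K \<rho> (op_apply d n H ` U)"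
    unfolding subrep_def invariant_def by (auto simp: equivariant_op_apply[OF H])
qed

lemma subrep_vimage:
  assumes H: "equivariant_op d n K \<rho> H" and U: "subrep d n K \<rho> U" and T: "subrep d n K \<rho> T"
  shows "subrep d n K \<rho> {u \<in> U. op_apply d n H u \<in> T}"
  unfolding subrep_def
proof
  from U T show "subspaceW d n {u \<in> U. op_apply d n H u \<in> T}"
    unfolding subrep_def subspaceW_def
    by (auto simp: op_apply_zero op_apply_add op_apply_scale)
  from U T show "invariant d n K \<rho> {u \<in> U. op_apply d n H u \<in> T}"
    unfolding subrep_def invariant_def by (auto simp: equivariant_op_apply[OF H, symmetric])
qed

lemma irred_subrep_image:
  assumes H: "equivariant_op d n K \<rho> H" and U: "irred_subrep d n K \<rho> U"
    and inj: "inj_on (op_apply d n H) U"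
  shows "irred_subrep d n K \<rho> (op_apply d n H ` U)"
proof -
  let ?h = "op_apply d n H"
  have U_subrep: "subrep d n K \<rho> U" and U_nonzero: "U \<noteq> {\<lambda>_. 0}"
    and U_min: "\<And>T. subrep d n K \<rho> T \<Longrightarrow> T \<subseteq> U \<Longrightarrow> T = {\<lambda>_. 0} \<or> T = U"
    using U unfolding irred_subrep_def by auto
  have zero_U: "(\<lambda>_. 0) \<in> U"
    using U_subrep subspaceW_zero unfolding subrep_def by blast
  have "?h ` U \<noteq> {\<lambda>_. 0}"
  proof
    assume "?h ` U = {\<lambda>_. 0}"
    then have "u = (\<lambda>_. 0)" if "u \<in> U" for u
      using inj zero_U that by (metis inj_on_eq_iff op_apply_zero singleton_iff image_eqI)
    with zero_U U_nonzero show False by blast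
  qed
  moreover have "T = {\<lambda>_. 0} \<or> T = ?h ` U" if T: "subrep d n K \<rho> T" "T \<subseteq> ?h ` U" for T
  proof -
    have zero_T: "(\<lambda>_. 0) \<in> T"
      using T(1) subspaceW_zero unfolding subrep_def by blast
    have T_eq: "T = ?h ` {u \<in> U. ?h u \<in> T}"
      using T(2) by auto
    from U_min[OF subrep_vimage[OF H U_subrep T(1)]]
    consider "{u \<in> U. ?h u \<in> T} = {\<lambda>_. 0}" | "{u \<in> U. ?h u \<in> T} = U"
      by blast
    then show ?thesis
    proof cases
      case 1
      with T_eq have "T \<subseteq> {\<lambda>_. 0}"
        by (simp add: op_apply_zero)
      with zero_T show ?thesis by blast
    next
      case 2
      with T_eq show ?thesis by simp
    qed
  qed
  ultimately show ?thesis
    using subrep_image[OF H U_subrep] unfolding irred_subrep_def by blast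
qed

lemma rep_iso_image:
  assumes H: "equivariant_op d n K \<rho> H" and iso: "rep_iso d n K \<rho> V U"
    and inj: "inj_on (op_apply d n H) U"
  shows "rep_iso d n K \<rho> V (op_apply d n H ` U)"
proof -
  let ?h = "op_apply d n H"
  obtain f where f: "bij_betw f V U"
    "\<forall>u\<in>V. \<forall>v\<in>V. f (\<lambda>x. u x + v x) = (\<lambda>x. f u x + f v x)"
    "\<forall>c::complex. \<forall>v\<in>V. f (\<lambda>x. c * v x) = (\<lambda>x. c * f v x)"
    "\<forall>g\<in>carrier K. \<forall>v\<in>V. f (op_apply d n (\<rho> g) v) = op_apply d n (\<rho> g) (f v)"
    using iso unfolding rep_iso_def by blast
  have "bij_betw (?h \<circ> f) V (?h ` U)"
    using f(1) inj by (intro bij_betw_trans) (auto simp: bij_betw_def)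
  with f(2-4) show ?thesis
    unfolding rep_iso_def
    by (intro exI[of _ "?h \<circ> f"]) (simp add: op_apply_add op_apply_scale equivariant_op_apply[OF H])
qed

lemma subspaceW_isotypic: "subspaceW d n (isotypic d n K \<rho> V)"
  unfolding isotypic_def
  by (rule subspaceW_spanW) (auto simp: irred_subrep_def subrep_def subspaceW_def)

lemma irred_subrep_subset_isotypic:
  "irred_subrep d n K \<rho> U \<Longrightarrow> rep_iso d n K \<rho> V U \<Longrightarrow> U \<subseteq> isotypic d n K \<rho> V"
  unfolding isotypic_def by (rule order_trans[OF _ spanW_superset]) blast

lemma image_irred_subrep_subset_isotypic:
  assumes H: "equivariant_op d n K \<rho> H" and U: "irred_subrep d n K \<rho> U"
    and iso: "rep_iso d n K \<rho> V U"
  shows "op_apply d n H ` U \<subseteq> isotypic d n K \<rho> V"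
proof -
  let ?h = "op_apply d n H"
  have U_subrep: "subrep d n K \<rho> U"
    using U unfolding irred_subrep_def by blast
  have "{u \<in> U. ?h u \<in> {\<lambda>_. 0}} = {\<lambda>_. 0} \<or> {u \<in> U. ?h u \<in> {\<lambda>_. 0}} = U"
    using U subrep_vimage[OF H U_subrep subrep_zero] unfolding irred_subrep_def by blast
  then consider "\<And>u. u \<in> U \<Longrightarrow> ?h u = (\<lambda>_. 0) \<Longrightarrow> u = (\<lambda>_. 0)" | "?h ` U \<subseteq> {\<lambda>_. 0}"
    by auto
  then show ?thesis
  proof cases
    case 1
    then have inj: "inj_on ?h U"
      using U_subrep unfolding subrep_def by (blast intro: inj_on_op_apply)
    show ?thesis
      by (rule irred_subrep_subset_isotypic[OF irred_subrep_image[OF H U inj] rep_iso_image[OF H iso inj]])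
  next
    case 2
    moreover have "{\<lambda>_. 0} \<subseteq> isotypic d n K \<rho> V"
      using subspaceW_zero[OF subspaceW_isotypic] by simp
    ultimately show ?thesis
      by (rule order_trans)
  qed
qed

lemma op_invariant_isotypic:
  assumes H: "equivariant_op d n K \<rho> H"
  shows "op_invariant d n H (isotypic d n K \<rho> V)"
proof -
  let ?X = "\<Union>{U. irred_subrep d n K \<rho> U \<and> rep_iso d n K \<rho> V U}"
  let ?P = "{v. inW d n v \<and> op_apply d n H v \<in> isotypic d n K \<rho> V}"
  have "?X \<subseteq> ?P"
    using image_irred_subrep_subset_isotypic[OF H]
    by (auto simp: irred_subrep_def subrep_def subspaceW_def)
  then have "spanW d n ?X \<subseteq> ?P"
    by (intro spanW_minimal subspaceW_vimage_op_apply subspaceW_isotypic)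
  then show ?thesis
    unfolding op_invariant_def isotypic_def by auto
qed

theorem mainTheorem1:
  fixes d n :: nat and F :: "nat list \<Rightarrow> real"
    and K :: "('g, 'b) monoid_scheme" and \<rho> :: "'g \<Rightarrow> cop"
    and Vi :: "cvec set" and HM :: cop and e0 :: real and \<xi> :: cvec
    and params :: "(real \<times> real) list"
  assumes "d \<ge> 1" and "n \<ge> 1"
    and rep: "unitary_rep d n K \<rho>"
    and sym: "\<forall>g\<in>carrier K. op_mult d n (\<rho> g) (problem_ham d n F) = op_mult d n (problem_ham d n F) (\<rho> g)"
    and Vi: "irred_subrep d n K \<rho> Vi"
    and herm: "hermitian d n HM"
    and PF: "perron_frobenius_hyp d n HM"
    and low: "lowest_eigenvalue d n HM e0"
    and onedim: "\<exists>v. v \<noteq> (\<lambda>_. 0) \<and> eigenspace_op d n HM (complex_of_real e0) = {(\<lambda>x. c * v x) | c. True}"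
    and inWi: "eigenspace_op d n HM (complex_of_real e0) \<subseteq> isotypic d n K \<rho> Vi"
    and preserves: "\<forall>U. irred_subrep d n K \<rho> U \<longrightarrow>
        (\<forall>v\<in>isotypic d n K \<rho> U. op_apply d n HM v \<in> isotypic d n K \<rho> U)"
    and xi: "\<xi> \<in> eigenspace_op d n HM (complex_of_real e0)" "vnorm2 d n \<xi> = 1"
    and p: "length params \<ge> 1"
  shows "qaoa_state d n HM (problem_ham d n F) params \<xi> \<in> isotypic d n K \<rho> Vi"
proof -
  have "op_invariant d n HM (isotypic d n K \<rho> Vi)"
    using preserves Vi unfolding op_invariant_def by blast
  moreover have "op_invariant d n (problem_ham d n F) (isotypic d n K \<rho> Vi)"
    using sym unfolding equivariant_op_def[symmetric] by (rule op_invariant_isotypic)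
  moreover have "\<xi> \<in> isotypic d n K \<rho> Vi"
    using xi(1) inWi by blast
  ultimately show ?thesis
    by (rule qaoa_state_in_invariant_subspace[OF subspaceW_isotypic])
qed

end
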